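(* Let $p$ be an odd prime, $q=p^m$, and let $D$ be the set of all nonzero squares in $\mathrm{GF}(q)$. If $m$ is odd, then $\mathcal{C}_D$ is a one-weight code over $\mathrm{GF}(p)$ with parameters $[(q-1)/2,\ m,\ (p-1)q/(2p)]$. If $m$ is even, then $\mathcal{C}_D$ is a two-weight code over $\mathrm{GF}(p)$ with parameters $[(q-1)/2,\ m,\ (p-1)(q-\sqrt q)/(2p)]$ and weight enumerator $1+\frac{q-1}{2}z^{(p-1)(q-\sqrt q)/(2p)}+\frac{q-1}{2}z^{(p-1)(q+\sqrt q)/(2p)}$.
   Context: $\mathrm{Tr}$ denotes the absolute trace from $\mathrm{GF}(q)$ onto $\mathrm{GF}(p)$. For a subset $D=\{d_1,\dots,d_n\}\subseteq\mathrm{GF}(q)$ (listed in a fixed order), $\mathcal{C}_D=\{(\mathrm{Tr}(xd_1),\dots,\mathrm{Tr}(xd_n)) : x\in\mathrm{GF}(q)\}$, a linear code of length $n$ over $\mathrm{GF}(p)$. The weight enumerator of a code of length $n$ is $\sum_{i=0}^n A_iz^i$ where $A_i$ is the number of codewords of Hamming weight $i$; a $t$-weight code is one with exactly $t$ distinct nonzero weights. *)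

theory Defs
  imports "HOL-Computational_Algebra.Polynomial"
begin

definition tr :: "nat \<Rightarrow> nat \<Rightarrow> 'a::field \<Rightarrow> 'a" where
  "tr p m x = (\<Sum>i<m. x ^ (p ^ i))"

text \<open>The codeword indexed by x: the vector (Tr(x d))_{d in D}, represented as a function
  on D (value 0 outside D).\<close>
definition codeword :: "nat \<Rightarrow> nat \<Rightarrow> 'a::field set \<Rightarrow> 'a \<Rightarrow> ('a \<Rightarrow> 'a)" where
  "codeword p m D x = (\<lambda>d. if d \<in> D then tr p m (x * d) else 0)"

definition code :: "nat \<Rightarrow> nat \<Rightarrow> 'a::field set \<Rightarrow> ('a \<Rightarrow> 'a) set" where
  "code p m D = range (codeword p m D)"

definition code_length :: "'a set \<Rightarrow> nat" where
  "code_length D = card D"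

definition hamming_wt :: "'a set \<Rightarrow> ('a \<Rightarrow> 'b::zero) \<Rightarrow> nat" where
  "hamming_wt D c = card {d \<in> D. c d \<noteq> 0}"

definition wt_distr :: "nat \<Rightarrow> nat \<Rightarrow> 'a::field set \<Rightarrow> nat \<Rightarrow> nat" where
  "wt_distr p m D i = card {c \<in> code p m D. hamming_wt D c = i}"

definition weight_enumerator :: "nat \<Rightarrow> nat \<Rightarrow> 'a::field set \<Rightarrow> nat poly" where
  "weight_enumerator p m D = (\<Sum>i\<le>code_length D. monom (wt_distr p m D i) i)"

definition nonzero_weights :: "nat \<Rightarrow> nat \<Rightarrow> 'a::field set \<Rightarrow> nat set" where
  "nonzero_weights p m D = {hamming_wt D c | c. c \<in> code p m D \<and> c \<noteq> (\<lambda>_. 0)}"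

definition is_t_weight :: "nat \<Rightarrow> nat \<Rightarrow> nat \<Rightarrow> 'a::field set \<Rightarrow> bool" where
  "is_t_weight t p m D \<longleftrightarrow> card (nonzero_weights p m D) = t"

definition min_distance :: "nat \<Rightarrow> nat \<Rightarrow> 'a::field set \<Rightarrow> nat" where
  "min_distance p m D = Min (nonzero_weights p m D)"

text \<open>Dimension over GF(p): the code is a GF(p)-subspace, so dimension k means p^k codewords.\<close>
definition has_dim :: "nat \<Rightarrow> nat \<Rightarrow> 'a::field set \<Rightarrow> nat \<Rightarrow> bool" where
  "has_dim p m D k \<longleftrightarrow> card (code p m D) = p ^ k"

definition nonzero_squares :: "'a::field set" where
  "nonzero_squares = {y. y \<noteq> 0 \<and> (\<exists>x. y = x ^ 2)}"

end

theory Submission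
  imports Defs "HOL-Computational_Algebra.Primes"
begin

text \<open>Let \<open>q = p ^ m\<close>, let \<open>D\<close> be the nonzero squares and \<open>c\<close> a nonsquare, so that the
  nonzero elements split into the cosets \<open>D\<close> and \<open>c D\<close>. The codeword of \<open>a\<close> has weight
  \<open>w(a) = #{d \<in> D. Tr(a d) \<noteq> 0}\<close>; it is constant on the cosets \<open>a D\<close>, and
  \<open>w(a) + w(c a) = #{x \<noteq> 0. Tr(a x) \<noteq> 0} = q - q/p\<close>.

  If \<open>m\<close> is odd, \<open>c\<close> can be taken in \<open>GF(p)\<close>, where the trace is linear, so \<open>w(c a) = w(a)\<close>
  and every nonzero weight is \<open>(p - 1) q / (2 p)\<close>.

  If \<open>m\<close> is even, \<open>GF(p)\<close> consists of squares, so \<open>N(b) = #{y. Tr(a y^2) = b}\<close> takes the same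
  value for all \<open>b \<noteq> 0\<close> in \<open>GF(p)\<close>. Counting the pairs with \<open>Tr(a y^2) = Tr(a z^2)\<close> via the
  substitution \<open>(y - z, y + z)\<close> gives the second moment of \<open>N\<close>, which forces
  \<open>p N(0) = q \<plusminus> (p - 1) sqrt q\<close>. As \<open>N(0) = q - 2 w(a)\<close>, this gives
  \<open>2 p w(a) = (p - 1)(q \<mp> sqrt q)\<close>, and the relation between \<open>w(a)\<close> and \<open>w(c a)\<close> makes the
  two cosets take different values.\<close>

section \<open>Finite fields\<close>

lemma of_nat_CARD_eq_0: "(of_nat (card (UNIV :: 'a::{ring_1,finite} set)) :: 'a) = 0"
proof -
  have "(\<Sum>y\<in>UNIV. y + (1::'a)) = (\<Sum>y\<in>UNIV. y)"
    by (rule sum.reindex_bij_witness[of _ "\<lambda>y. y - 1" "\<lambda>y. y + 1"]) auto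
  then show ?thesis
    by (simp add: sum.distrib)
qed

lemma CHAR_eq_prime_of_card:
  assumes "prime p" and "card (UNIV :: 'a::{field,finite} set) = p ^ m"
  shows "CHAR('a) = p"
proof -
  have "prime CHAR('a)"
    by (rule prime_CHAR_semidom[OF finite_imp_CHAR_pos]) simp
  moreover have "CHAR('a) dvd p ^ m"
    using of_nat_CARD_eq_0 of_nat_eq_0_iff_char_dvd assms(2) by metis
  ultimately show ?thesis
    using assms(1) prime_dvd_power primes_dvd_imp_eq by metis
qed

lemma power_card_UNIV_minus_1:
  assumes "(x::'a::{field,finite}) \<noteq> 0"
  shows "x ^ (card (UNIV :: 'a set) - 1) = 1"
proof -
  have "(\<Prod>y\<in>UNIV - {0}. x * y) = (\<Prod>y\<in>UNIV - {0}. y)"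
    by (rule prod.reindex_bij_witness[of _ "\<lambda>y. y / x" "\<lambda>y. x * y"]) (use assms in auto)
  then show ?thesis
    by (simp add: prod.distrib)
qed

lemma power_card_UNIV_eq_self: "(x::'a::{field,finite}) ^ card (UNIV :: 'a set) = x"
proof (cases "x = 0")
  case False
  have "x ^ card (UNIV :: 'a set) = x * x ^ (card (UNIV :: 'a set) - 1)"
    by (simp add: finite_UNIV_card_ge_0 flip: power_Suc)
  then show ?thesis
    using power_card_UNIV_minus_1[OF False] by simp
qed (simp add: finite_UNIV_card_ge_0)

lemma card_power_eq_1_le:
  assumes "n > 0"
  shows "card {x::'a::idom. x ^ n = 1} \<le> n"
proof -
  define Q :: "'a poly" where "Q = monom 1 n - 1"
  have "coeff Q n = 1"
    using assms by (simp add: Q_def)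
  then have "Q \<noteq> 0"
    by auto
  moreover have "degree Q \<le> n"
    unfolding Q_def by (rule degree_diff_le) (auto simp: degree_monom_le)
  moreover have "{x. poly Q x = 0} = {x. x ^ n = 1}"
    by (auto simp: Q_def poly_monom)
  ultimately show ?thesis
    using card_poly_roots_bound[of Q] by simp
qed

lemma second_moment_identity:
  fixes p q k z y :: int
  assumes "z + (p - 1) * y = q"
    and "z ^ 2 + (p - 1) * y ^ 2 = q + (q - 1) * k"
    and "p * k = q"
  shows "(p * z - q) ^ 2 = (p - 1) ^ 2 * q"
proof -
  have "(p - 1) * y = q - z"
    using assms(1) by simp
  then have "p * (p - 1) * z ^ 2 + p * (q - z) ^ 2 = p * (p - 1) * z ^ 2 + p * ((p - 1) * y) ^ 2"
    by simp
  also have "\<dots> = p * (p - 1) * (z ^ 2 + (p - 1) * y ^ 2)"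
    by (simp add: power2_eq_square algebra_simps)
  also have "\<dots> = (p - 1) * (p * q + (q - 1) * (p * k))"
    unfolding assms(2) by (simp add: algebra_simps)
  finally show ?thesis
    unfolding assms(3) by algebra
qed

lemma square_eq_solve_weight:
  fixes p q r w :: int
  assumes "(p * (q - 2 * w) - q) ^ 2 = ((p - 1) * r) ^ 2"
  shows "2 * p * w = (p - 1) * (q - r) \<or> 2 * p * w = (p - 1) * (q + r)"
proof -
  have "p * (q - 2 * w) - q = (p - 1) * r \<or> p * (q - 2 * w) - q = - ((p - 1) * r)"
    using assms power2_eq_iff by blast
  then show ?thesis
  proof
    assume "p * (q - 2 * w) - q = (p - 1) * r"
    then have "2 * p * w = (p - 1) * (q - r)"
      by algebra
    then show ?thesis ..
  next
    assume "p * (q - 2 * w) - q = - ((p - 1) * r)"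
    then have "2 * p * w = (p - 1) * (q + r)"
      by algebra
    then show ?thesis ..
  qed
qed

section \<open>Squares in a finite field of odd order\<close>

lemma one_in_nonzero_squares: "1 \<in> nonzero_squares"
  unfolding nonzero_squares_def by (auto intro: exI[of _ 1])

context
  assumes odd_card: "odd (card (UNIV :: 'a::{field,finite} set))"
begin

lemma two_neq_zero: "(2::'a) \<noteq> 0"
proof
  assume two: "(2::'a) = 0"
  obtain k where "card (UNIV :: 'a set) = 2 * k + 1"
    using odd_card oddE by blast
  then have "(of_nat (card (UNIV :: 'a set)) :: 'a) = 2 * of_nat k + 1"
    by simp
  then show False
    using two of_nat_CARD_eq_0[where 'a='a] by simp
qed

lemma minus_neq_self: "(x::'a) \<noteq> 0 \<Longrightarrow> - x \<noteq> x"
  using two_neq_zero by (metis add_eq_0_iff2 mult_2 mult_eq_0_iff)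

lemma card_UNIV_ge_3: "card (UNIV :: 'a set) \<ge> 3"
proof -
  have "card {0, 1::'a} \<le> card (UNIV :: 'a set)"
    by (rule card_mono) auto
  then show ?thesis
    using odd_card by simp presburger
qed

lemma card_square_preimage:
  assumes "A \<subseteq> nonzero_squares"
  shows "card {y::'a. y \<noteq> 0 \<and> y ^ 2 \<in> A} = 2 * card A"
proof -
  have "card {y. y ^ 2 = a} = 2" if "a \<in> A" for a
  proof -
    obtain t where t: "a = t ^ 2" "t \<noteq> 0"
      using \<open>a \<in> A\<close> assms by (auto simp: nonzero_squares_def)
    then have "{y. y ^ 2 = a} = {t, -t}"
      by (auto simp: power2_eq_iff)
    then show ?thesis
      using minus_neq_self[OF t(2)] by simp
  qed
  moreover have "{y. y \<noteq> 0 \<and> y ^ 2 \<in> A} = (\<Union>a\<in>A. {y. y ^ 2 = a})"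
    using assms by (auto simp: nonzero_squares_def)
  moreover have "card (\<Union>a\<in>A. {y::'a. y ^ 2 = a}) = (\<Sum>a\<in>A. card {y. y ^ 2 = a})"
    by (rule card_UN_disjoint) auto
  ultimately show ?thesis
    by simp
qed

lemma card_nonzero_squares: "2 * card (nonzero_squares :: 'a set) = card (UNIV :: 'a set) - 1"
proof -
  have "{y::'a. y \<noteq> 0 \<and> y ^ 2 \<in> nonzero_squares} = UNIV - {0}"
    by (auto simp: nonzero_squares_def)
  then show ?thesis
    using card_square_preimage[of nonzero_squares] by (simp add: card_Diff_singleton)
qed

lemma nonzero_squares_eq_power_roots:
  "nonzero_squares = {x::'a. x ^ ((card (UNIV :: 'a set) - 1) div 2) = 1}"
proof -
  define h where "h = (card (UNIV :: 'a set) - 1) div 2"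
  have two_h: "2 * h = card (UNIV :: 'a set) - 1"
    using odd_card unfolding h_def by presburger
  have h_pos: "h > 0"
    using two_h card_UNIV_ge_3 by simp
  have squares_subset: "nonzero_squares \<subseteq> {x::'a. x ^ h = 1}"
  proof
    fix x :: 'a
    assume "x \<in> nonzero_squares"
    then obtain t where "x = t ^ 2" "t \<noteq> 0"
      by (auto simp: nonzero_squares_def)
    then show "x \<in> {x. x ^ h = 1}"
      using power_card_UNIV_minus_1[of t] two_h by (simp add: power_mult[symmetric])
  qed
  moreover have "card {x::'a. x ^ h = 1} \<le> card (nonzero_squares :: 'a set)"
    using card_power_eq_1_le[OF h_pos, where 'a='a] card_nonzero_squares two_h by linarith
  ultimately show ?thesis
    unfolding h_def[symmetric] by (intro card_seteq) auto
qed

lemma mult_square_image_nonzero_squares: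
  assumes "t \<noteq> 0"
  shows "(\<lambda>d. t ^ 2 * d) ` nonzero_squares = (nonzero_squares :: 'a set)"
proof (intro equalityI subsetI)
  fix x :: 'a
  assume "x \<in> (\<lambda>d. t ^ 2 * d) ` nonzero_squares"
  then show "x \<in> nonzero_squares"
    using assms by (auto simp: nonzero_squares_def power_mult_distrib[symmetric])
next
  fix x :: 'a
  assume "x \<in> nonzero_squares"
  then obtain s where "x = s ^ 2" "s \<noteq> 0"
    by (auto simp: nonzero_squares_def)
  then have "x = t ^ 2 * (s / t) ^ 2"
    using assms by (simp add: field_simps)
  moreover have "(s / t) ^ 2 \<in> nonzero_squares"
    using \<open>s \<noteq> 0\<close> assms unfolding nonzero_squares_def by auto
  ultimately show "x \<in> (\<lambda>d. t ^ 2 * d) ` nonzero_squares"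
    by blast
qed

lemma nonsquare_exists: "\<exists>c::'a. c \<noteq> 0 \<and> c \<notin> nonzero_squares"
proof (rule ccontr)
  assume "\<nexists>c::'a. c \<noteq> 0 \<and> c \<notin> nonzero_squares"
  then have "nonzero_squares = UNIV - {0::'a}"
    by (auto simp: nonzero_squares_def)
  then have "card (nonzero_squares :: 'a set) = card (UNIV :: 'a set) - 1"
    using card_Diff_singleton[of "0::'a" UNIV] by simp
  then show False
    using card_nonzero_squares card_UNIV_ge_3 by simp
qed

lemma nonzero_split_squares:
  assumes "c \<noteq> 0" and "c \<notin> nonzero_squares"
  shows "nonzero_squares \<inter> (\<lambda>d. c * d) ` nonzero_squares = {}"
    and "UNIV - {0} = nonzero_squares \<union> (\<lambda>d. c * d) ` (nonzero_squares :: 'a set)"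
proof -
  show disjoint: "nonzero_squares \<inter> (\<lambda>d. c * d) ` nonzero_squares = {}"
  proof (rule ccontr)
    assume "nonzero_squares \<inter> (\<lambda>d. c * d) ` nonzero_squares \<noteq> {}"
    then obtain s t where "c * t ^ 2 = s ^ 2" "t \<noteq> 0"
      by (auto simp: nonzero_squares_def)
    then have "c = (s / t) ^ 2"
      by (simp add: field_simps)
    then show False
      using assms by (auto simp: nonzero_squares_def)
  qed
  have "card ((\<lambda>d. c * d) ` nonzero_squares) = card (nonzero_squares :: 'a set)"
    using assms(1) by (intro card_image) (simp add: inj_on_def)
  then have "card (nonzero_squares \<union> (\<lambda>d. c * d) ` nonzero_squares) = card (UNIV - {0::'a})"
    using disjoint card_nonzero_squares by (simp add: card_Un_disjoint card_Diff_singleton)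
  moreover have "nonzero_squares \<union> (\<lambda>d. c * d) ` nonzero_squares \<subseteq> UNIV - {0::'a}"
    using assms(1) by (auto simp: nonzero_squares_def)
  ultimately show "UNIV - {0} = nonzero_squares \<union> (\<lambda>d. c * d) ` (nonzero_squares :: 'a set)"
    by (intro card_subset_eq[symmetric]) auto
qed

end

section \<open>The absolute trace\<close>

context
  fixes p m :: nat
  assumes prime_p: "prime p"
    and card_UNIV: "card (UNIV :: 'a::{field,finite} set) = p ^ m"
begin

abbreviation Tr :: "'a \<Rightarrow> 'a" where
  "Tr \<equiv> tr p m"

lemma p_gt_1: "p > 1"
  using prime_p prime_gt_1_nat by blast

lemma m_pos: "m > 0"
proof -
  have "card {0, 1::'a} \<le> card (UNIV :: 'a set)"
    by (rule card_mono) auto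
  then show ?thesis
    using card_UNIV by (cases m) auto
qed

lemma p_power_m_eq: "p ^ m = p * p ^ (m - 1)"
  using m_pos by (cases m) auto

lemma CHAR_eq: "CHAR('a) = p"
  using CHAR_eq_prime_of_card[OF prime_p card_UNIV] .

lemma power_p_power_m: "(x::'a) ^ (p ^ m) = x"
  using power_card_UNIV_eq_self[of x] card_UNIV by simp

lemma tr_add: "Tr (x + y) = Tr x + Tr y"
proof -
  have "(x + y) ^ (p ^ i) = x ^ (p ^ i) + y ^ (p ^ i)" for i
    by (rule freshmans_dream') (simp_all add: CHAR_eq prime_p)
  then show ?thesis
    by (simp add: tr_def sum.distrib)
qed

lemma tr_0: "Tr 0 = 0"
  using p_gt_1 by (simp add: tr_def power_0_left)

lemma tr_diff: "Tr (x - y) = Tr x - Tr y"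
  using tr_add[of "x - y" y] by (simp add: eq_diff_eq)

definition prime_subfield :: "'a set" where
  "prime_subfield = {c. c ^ p = c}"

lemma prime_subfield_power: "c \<in> prime_subfield \<Longrightarrow> c ^ (p ^ i) = c"
  by (induction i) (simp_all add: prime_subfield_def power_mult)

lemma zero_in_prime_subfield: "0 \<in> prime_subfield"
  using p_gt_1 by (simp add: prime_subfield_def)

lemma prime_subfield_power_p_minus_1:
  assumes "c \<in> prime_subfield" and "c \<noteq> 0"
  shows "c ^ (p - 1) = 1"
proof -
  have "c * c ^ (p - 1) = c * 1"
    using assms(1) p_gt_1 by (simp add: prime_subfield_def flip: power_Suc)
  then show ?thesis
    using assms(2) by simp
qed

lemma tr_mult_prime_subfield: "c \<in> prime_subfield \<Longrightarrow> Tr (c * x) = c * Tr x"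
  by (simp add: tr_def power_mult_distrib prime_subfield_power sum_distrib_left)

lemma tr_in_prime_subfield: "Tr x \<in> prime_subfield"
proof -
  have "(x ^ (p ^ i)) ^ p = x ^ (p ^ Suc i)" for i
    by (simp add: power_mult[symmetric] mult.commute)
  then have "Tr x ^ p = (\<Sum>i<m. x ^ (p ^ Suc i))"
    unfolding tr_def by (simp add: freshmans_dream_sum CHAR_eq prime_p)
  also have "\<dots> = Tr x"
    unfolding tr_def using sum.lessThan_Suc_shift[of "\<lambda>i. x ^ (p ^ i)" m]
    by (simp add: power_p_power_m)
  finally show ?thesis
    by (simp add: prime_subfield_def)
qed

text \<open>The trace is a nonzero polynomial of degree \<open>p ^ (m - 1) < q\<close>, so it has a non-root.\<close>

lemma tr_not_identically_zero: "\<exists>x. Tr x \<noteq> 0"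
proof (rule ccontr)
  assume "\<nexists>x. Tr x \<noteq> 0"
  define T :: "'a poly" where "T = (\<Sum>i<m. monom 1 (p ^ i))"
  have "coeff T (p ^ (m - 1)) = (\<Sum>i<m. if p ^ i = p ^ (m - 1) then 1 else 0)"
    by (simp add: T_def coeff_sum)
  also have "\<dots> = (\<Sum>i\<in>{m - 1}. 1)"
    using m_pos p_gt_1 by (intro sum.mono_neutral_cong_right) auto
  finally have "T \<noteq> 0"
    by auto
  moreover have "{x. poly T x = 0} = UNIV"
    using \<open>\<nexists>x. Tr x \<noteq> 0\<close> by (simp add: T_def poly_sum poly_monom tr_def)
  moreover have "degree T \<le> p ^ (m - 1)"
    unfolding T_def
    by (rule degree_sum_le) (use p_gt_1 in \<open>auto intro!: order.trans[OF degree_monom_le]\<close>)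
  ultimately have "p ^ m \<le> p ^ (m - 1)"
    using card_poly_roots_bound[of T] card_UNIV by simp
  then show False
    using m_pos p_gt_1 by simp
qed

lemma card_tr_fibre:
  assumes "c \<in> prime_subfield"
  shows "card {x. Tr x = c} = card {x. Tr x = 0}"
proof -
  obtain a where a: "Tr a \<noteq> 0"
    using tr_not_identically_zero by blast
  define b where "b = c / Tr a * a"
  have "c / Tr a \<in> prime_subfield"
    using assms tr_in_prime_subfield[of a] by (simp add: prime_subfield_def power_divide)
  then have "Tr b = c"
    unfolding b_def using a tr_mult_prime_subfield[OF \<open>c / Tr a \<in> prime_subfield\<close>] by simp
  then have "bij_betw (\<lambda>x. b + x) {x. Tr x = 0} {x. Tr x = c}"
    by (intro bij_betw_byWitness[where f' = "\<lambda>y. y - b"]) (auto simp: tr_add tr_diff)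
  then show ?thesis
    by (metis bij_betw_same_card)
qed

lemma card_prime_subfield_mult_card_tr_kernel:
  "card prime_subfield * card {x. Tr x = 0} = p ^ m"
proof -
  have "UNIV = (\<Union>c\<in>prime_subfield. {x. Tr x = c})"
    using tr_in_prime_subfield by auto
  then have "p ^ m = card (\<Union>c\<in>prime_subfield. {x. Tr x = c})"
    using card_UNIV by simp
  also have "\<dots> = (\<Sum>c\<in>prime_subfield. card {x. Tr x = c})"
    by (rule card_UN_disjoint) auto
  also have "\<dots> = card prime_subfield * card {x. Tr x = 0}"
    by (simp add: card_tr_fibre)
  finally show ?thesis ..
qed

lemma card_prime_subfield: "card prime_subfield = p"
proof -
  have "card prime_subfield dvd p ^ m"
    using card_prime_subfield_mult_card_tr_kernel by (metis dvd_triv_left)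
  then obtain i where i: "i \<le> m" "card prime_subfield = p ^ i"
    using divides_primepow_nat[OF prime_p] by blast
  have "card (prime_subfield - {0}) \<le> card {x::'a. x ^ (p - 1) = 1}"
    using prime_subfield_power_p_minus_1 by (intro card_mono) auto
  also have "\<dots> \<le> p - 1"
    using card_power_eq_1_le[where 'a='a] p_gt_1 by simp
  finally have "card prime_subfield \<le> p"
    using p_gt_1 by (simp add: card_Diff_singleton_if split: if_splits)
  have "{0, 1} \<subseteq> prime_subfield"
    using zero_in_prime_subfield by (simp add: prime_subfield_def)
  then have "2 \<le> card prime_subfield"
    using card_mono[of prime_subfield "{0, 1}"] by simp
  then have "i \<noteq> 0"
    using i by (cases i) auto
  moreover have "i \<le> 1"
    using i \<open>card prime_subfield \<le> p\<close> p_gt_1 power_le_imp_le_exp[of p i 1] by simp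
  ultimately have "i = 1"
    using i by (cases i) auto
  then show ?thesis
    using i by simp
qed

lemma card_tr_kernel: "card {x. Tr x = 0} = p ^ (m - 1)"
  using card_prime_subfield_mult_card_tr_kernel card_prime_subfield p_power_m_eq p_gt_1 by simp

lemma card_tr_mult_kernel:
  assumes "b \<noteq> 0"
  shows "card {x. Tr (b * x) = 0} = p ^ (m - 1)"
proof -
  have "bij_betw (\<lambda>x. b * x) {x. Tr (b * x) = 0} {x. Tr x = 0}"
    using assms by (intro bij_betw_byWitness[where f' = "\<lambda>y. y / b"]) auto
  then show ?thesis
    using card_tr_kernel by (simp add: bij_betw_same_card)
qed

lemma sum_card_tr_quadratic: "(\<Sum>c\<in>prime_subfield. card {y. Tr (a * y ^ 2) = c}) = p ^ m"
proof -
  have "UNIV = (\<Union>c\<in>prime_subfield. {y. Tr (a * y ^ 2) = c})"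
    using tr_in_prime_subfield by auto
  then have "p ^ m = card (\<Union>c\<in>prime_subfield. {y. Tr (a * y ^ 2) = c})"
    using card_UNIV by simp
  also have "\<dots> = (\<Sum>c\<in>prime_subfield. card {y. Tr (a * y ^ 2) = c})"
    by (rule card_UN_disjoint) auto
  finally show ?thesis ..
qed

lemma sum_square_card_tr_quadratic:
  "(\<Sum>c\<in>prime_subfield. card {y. Tr (a * y ^ 2) = c} ^ 2)
     = card {(y, z). Tr (a * y ^ 2) = Tr (a * z ^ 2)}"
proof -
  have "{(y, z). Tr (a * y ^ 2) = Tr (a * z ^ 2)}
      = (\<Union>c\<in>prime_subfield. {y. Tr (a * y ^ 2) = c} \<times> {z. Tr (a * z ^ 2) = c})"
    using tr_in_prime_subfield by auto
  moreover have "card (\<Union>c\<in>prime_subfield. {y. Tr (a * y ^ 2) = c} \<times> {z. Tr (a * z ^ 2) = c})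
      = (\<Sum>c\<in>prime_subfield. card ({y. Tr (a * y ^ 2) = c} \<times> {z. Tr (a * z ^ 2) = c}))"
    by (rule card_UN_disjoint) auto
  ultimately show ?thesis
    by (simp add: card_cartesian_product power2_eq_square)
qed

lemma card_tr_product_kernel:
  assumes "a \<noteq> 0"
  shows "card {(u, v). Tr (a * u * v) = 0} = p ^ m + (p ^ m - 1) * p ^ (m - 1)"
proof -
  have "{(u, v). Tr (a * u * v) = 0} = (SIGMA u:UNIV. {v. Tr (a * u * v) = 0})"
    by auto
  then have "card {(u, v). Tr (a * u * v) = 0} = (\<Sum>u\<in>UNIV. card {v. Tr (a * u * v) = 0})"
    by simp
  also have "\<dots> = card {v::'a. Tr (a * 0 * v) = 0} + (\<Sum>u\<in>UNIV - {0}. card {v. Tr (a * u * v) = 0})"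
    by (rule sum.remove) auto
  also have "\<dots> = p ^ m + (\<Sum>u\<in>UNIV - {0::'a}. p ^ (m - 1))"
    using assms tr_0 card_UNIV by (simp add: card_tr_mult_kernel)
  finally show ?thesis
    using card_UNIV by (simp add: card_Diff_singleton)
qed

section \<open>Weights of trace codes\<close>

definition trace_weight :: "'a set \<Rightarrow> 'a \<Rightarrow> nat" where
  "trace_weight A x = card {d \<in> A. Tr (x * d) \<noteq> 0}"

lemma hamming_wt_codeword: "hamming_wt A (codeword p m A x) = trace_weight A x"
  unfolding hamming_wt_def codeword_def trace_weight_def by (rule arg_cong[where f = card]) auto

lemma codeword_eq_0_iff: "codeword p m A x = (\<lambda>_. 0) \<longleftrightarrow> trace_weight A x = 0"
  by (auto simp: codeword_def trace_weight_def fun_eq_iff)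

lemma codeword_diff: "codeword p m A (x - y :: 'a) = (\<lambda>d. codeword p m A x d - codeword p m A y d)"
  by (simp add: codeword_def fun_eq_iff left_diff_distrib tr_diff)

lemma trace_weight_le_card: "trace_weight A x \<le> card A"
  unfolding trace_weight_def by (rule card_mono) auto

lemma trace_weight_mult_image:
  assumes "c \<noteq> 0"
  shows "trace_weight ((\<lambda>d. c * d) ` A) x = trace_weight A (c * x)"
proof -
  have "{d \<in> (\<lambda>d. c * d) ` A. Tr (x * d) \<noteq> 0} = (\<lambda>d. c * d) ` {d \<in> A. Tr (c * x * d) \<noteq> 0}"
    by (auto simp: mult_ac)
  then show ?thesis
    using assms unfolding trace_weight_def by (simp add: card_image inj_on_def)
qed

lemma trace_weight_Un:
  "A \<inter> B = {} \<Longrightarrow> trace_weight (A \<union> B) x = trace_weight A x + trace_weight B x"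
  unfolding trace_weight_def by (subst card_Un_disjoint[symmetric]) (auto intro: arg_cong[where f = card])

lemma trace_weight_nonzero:
  assumes "a \<noteq> 0"
  shows "trace_weight (UNIV - {0}) a = p ^ m - p ^ (m - 1)"
proof -
  have "{d \<in> UNIV - {0}. Tr (a * d) \<noteq> 0} = UNIV - {d. Tr (a * d) = 0}"
    using tr_0 by auto
  then show ?thesis
    unfolding trace_weight_def using card_tr_mult_kernel[OF assms] card_UNIV
    by (simp add: card_Diff_subset)
qed

lemma trace_weight_mult_prime_subfield:
  assumes "c \<in> prime_subfield" and "c \<noteq> 0"
  shows "trace_weight A (c * x) = trace_weight A x"
  using assms by (simp add: trace_weight_def mult.assoc tr_mult_prime_subfield)

lemma weight_enumerator_eq_sum_monom:
  assumes "inj (codeword p m A)"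
  shows "weight_enumerator p m A = (\<Sum>x\<in>UNIV. monom 1 (trace_weight A x))"
proof -
  have "wt_distr p m A i = card {x. trace_weight A x = i}" for i
  proof -
    have "{c \<in> code p m A. hamming_wt A c = i} = codeword p m A ` {x. trace_weight A x = i}"
      by (auto simp: code_def hamming_wt_codeword)
    then show ?thesis
      using assms unfolding wt_distr_def by (simp add: card_image inj_on_subset)
  qed
  moreover have "monom (card {x. trace_weight A x = i}) i
      = (\<Sum>x\<in>{x \<in> UNIV. trace_weight A x = i}. monom 1 (trace_weight A x))" for i
    by (simp add: of_nat_monom mult_monom)
  ultimately have "weight_enumerator p m A
      = (\<Sum>i\<le>card A. \<Sum>x\<in>{x \<in> UNIV. trace_weight A x = i}. monom 1 (trace_weight A x))"
    unfolding weight_enumerator_def code_length_def by simp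
  also have "\<dots> = (\<Sum>x\<in>UNIV. monom 1 (trace_weight A x))"
    by (rule sum.group) (auto simp: trace_weight_le_card)
  finally show ?thesis .
qed

section \<open>The code of the nonzero squares\<close>

context
  assumes odd_p: "odd p"
begin

lemma odd_card_UNIV: "odd (card (UNIV :: 'a set))"
  using odd_p card_UNIV by simp

lemma prime_subfield_power_half:
  assumes "c \<in> prime_subfield"
  shows "c ^ ((p ^ m - 1) div 2) = (c ^ ((p - 1) div 2)) ^ m"
proof -
  define s where "s = (\<Sum>i<m. p ^ i)"
  define k where "k = (p - 1) div 2"
  have "int (p ^ m - 1) = int ((p - 1) * s)"
    using power_diff_1_eq[of "int p" m] p_gt_1 by (simp add: s_def)
  then have "p ^ m - 1 = (p - 1) * s"
    by (simp only: of_nat_eq_iff)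
  moreover have "p - 1 = 2 * k"
    using odd_p unfolding k_def by presburger
  ultimately have "(p ^ m - 1) div 2 = s * k"
    by simp
  have "c ^ s = c ^ m"
    using assms by (simp add: s_def power_sum prime_subfield_power)
  have "c ^ (s * k) = (c ^ m) ^ k"
    by (simp only: power_mult \<open>c ^ s = c ^ m\<close>)
  also have "\<dots> = (c ^ k) ^ m"
    by (simp only: power_mult[symmetric] mult.commute)
  finally show ?thesis
    using \<open>(p ^ m - 1) div 2 = s * k\<close> by (simp add: k_def)
qed

lemma prime_subfield_subset_squares:
  assumes "even m" and "c \<in> prime_subfield" and "c \<noteq> 0"
  shows "c \<in> nonzero_squares"
proof -
  obtain j where "m = 2 * j"
    using assms(1) by blast
  moreover have "2 * ((p - 1) div 2) = p - 1"
    using odd_p by presburger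
  ultimately have "(c ^ ((p - 1) div 2)) ^ m = (c ^ (p - 1)) ^ j"
    by (metis power_mult mult.commute)
  then have "c ^ ((card (UNIV :: 'a set) - 1) div 2) = 1"
    using prime_subfield_power_half[OF assms(2)] prime_subfield_power_p_minus_1[OF assms(2,3)] card_UNIV
    by simp
  then show ?thesis
    by (subst nonzero_squares_eq_power_roots[OF odd_card_UNIV]) simp
qed

lemma prime_subfield_nonsquare_exists:
  assumes "odd m"
  shows "\<exists>c\<in>prime_subfield. c \<noteq> 0 \<and> c \<notin> nonzero_squares"
proof -
  define k where "k = (p - 1) div 2"
  have two_k: "2 * k = p - 1"
    using odd_p unfolding k_def by presburger
  then have "k > 0"
    using p_gt_1 odd_p by presburger
  have "card {x::'a. x ^ k = 1} < card (prime_subfield - {0})"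
    using card_power_eq_1_le[OF \<open>k > 0\<close>, where 'a='a] card_prime_subfield two_k \<open>k > 0\<close>
      zero_in_prime_subfield by (simp add: card_Diff_singleton)
  then have "\<not> prime_subfield - {0} \<subseteq> {x. x ^ k = 1}"
    using card_mono[of "{x::'a. x ^ k = 1}" "prime_subfield - {0}"] by auto
  then obtain c where c: "c \<in> prime_subfield" "c \<noteq> 0" "c ^ k \<noteq> 1"
    by auto
  have "(c ^ k) ^ 2 = 1"
    using prime_subfield_power_p_minus_1[OF c(1,2)] two_k by (simp flip: power_mult add: mult.commute)
  then have "c ^ k = -1"
    using c(3) power2_eq_1_iff by blast
  then have "c ^ ((card (UNIV :: 'a set) - 1) div 2) = -1"
    using prime_subfield_power_half[OF c(1)] assms card_UNIV by (simp add: k_def)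
  then have "c \<notin> nonzero_squares"
    using minus_neq_self[OF odd_card_UNIV, of 1]
    by (subst nonzero_squares_eq_power_roots[OF odd_card_UNIV]) auto
  then show ?thesis
    using c by blast
qed

lemma trace_weight_mult_nonzero_square:
  assumes "d \<in> nonzero_squares"
  shows "trace_weight nonzero_squares (d * b) = trace_weight nonzero_squares b"
proof -
  obtain t where "d = t ^ 2" "t \<noteq> 0"
    using assms by (auto simp: nonzero_squares_def)
  then show ?thesis
    using trace_weight_mult_image[of "t ^ 2" nonzero_squares b]
      mult_square_image_nonzero_squares[OF odd_card_UNIV \<open>t \<noteq> 0\<close>] by simp
qed

lemma trace_weight_add_nonsquare:
  assumes "a \<noteq> 0" and "c \<noteq> 0" and "c \<notin> nonzero_squares"
  shows "trace_weight nonzero_squares a + trace_weight nonzero_squares (c * a) = p ^ m - p ^ (m - 1)"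
proof -
  note split = nonzero_split_squares[OF odd_card_UNIV assms(2,3)]
  have "trace_weight nonzero_squares (c * a) = trace_weight ((\<lambda>d. c * d) ` nonzero_squares) a"
    using trace_weight_mult_image[OF assms(2)] by simp
  then show ?thesis
    using trace_weight_Un[OF split(1), of a] split(2) trace_weight_nonzero[OF assms(1)] by simp
qed

text \<open>If some \<open>a \<noteq> 0\<close> had weight 0, the complementary class would carry weight
  \<open>(p - 1) p ^ (m - 1) > (p ^ m - 1) / 2\<close>, more than there are squares.\<close>

lemma trace_weight_pos:
  assumes "a \<noteq> 0"
  shows "trace_weight nonzero_squares a > 0"
proof (rule ccontr)
  assume "\<not> trace_weight nonzero_squares a > 0"
  obtain c :: 'a where c: "c \<noteq> 0" "c \<notin> nonzero_squares"
    using nonsquare_exists[OF odd_card_UNIV] by blast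
  have "p ^ m - p ^ (m - 1) \<le> card (nonzero_squares :: 'a set)"
    using trace_weight_add_nonsquare[OF assms c] trace_weight_le_card[of nonzero_squares "c * a"]
      \<open>\<not> trace_weight nonzero_squares a > 0\<close> by simp
  then have "2 * (p ^ m - p ^ (m - 1)) \<le> p ^ m - 1"
    using card_nonzero_squares[OF odd_card_UNIV] card_UNIV by simp
  moreover have "2 * p ^ (m - 1) \<le> p ^ m" "p ^ (m - 1) > 0"
    using p_power_m_eq p_gt_1 by simp_all
  ultimately show False
    by linarith
qed

lemma trace_weight_eq_0_iff: "trace_weight nonzero_squares a = 0 \<longleftrightarrow> a = 0"
  using trace_weight_pos[of a] by (cases "a = 0") (simp_all add: trace_weight_def tr_0 card_gt_0_iff)

lemma trace_weight_odd:
  assumes "odd m" and "a \<noteq> 0"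
  shows "2 * trace_weight nonzero_squares a = p ^ m - p ^ (m - 1)"
proof -
  obtain c where c: "c \<in> prime_subfield" "c \<noteq> 0" "c \<notin> nonzero_squares"
    using prime_subfield_nonsquare_exists[OF assms(1)] by blast
  show ?thesis
    using trace_weight_add_nonsquare[OF assms(2) c(2,3)] trace_weight_mult_prime_subfield[OF c(1,2)]
    by simp
qed

lemma card_tr_quadratic_zero:
  "card {y. Tr (a * y ^ 2) = 0} + 2 * trace_weight nonzero_squares a = p ^ m"
proof -
  define A where "A = {d \<in> nonzero_squares. Tr (a * d) = 0}"
  have "{y. Tr (a * y ^ 2) = 0} = insert 0 {y. y \<noteq> 0 \<and> y ^ 2 \<in> A}"
    using tr_0 by (auto simp: A_def nonzero_squares_def)
  then have "card {y. Tr (a * y ^ 2) = 0} = 1 + 2 * card A"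
    using card_square_preimage[OF odd_card_UNIV, of A] by (simp add: A_def)
  moreover have "card A + trace_weight nonzero_squares a = card (nonzero_squares :: 'a set)"
  proof -
    define B where "B = {d \<in> nonzero_squares. Tr (a * d) \<noteq> 0}"
    have "nonzero_squares = A \<union> B" and "A \<inter> B = {}"
      by (auto simp: A_def B_def)
    then have "card A + card B = card (nonzero_squares :: 'a set)"
      using card_Un_disjoint[of A B] by (metis finite)
    moreover have "trace_weight nonzero_squares a = card B"
      by (simp add: trace_weight_def B_def)
    ultimately show ?thesis
      by simp
  qed
  moreover have "p ^ m \<ge> 1"
    using p_gt_1 by simp
  ultimately show ?thesis
    using card_nonzero_squares[OF odd_card_UNIV] card_UNIV by linarith
qed

lemma card_tr_quadratic_pairs:
  "card {(y, z). Tr (a * y ^ 2) = Tr (a * z ^ 2)} = card {(u, v). Tr (a * u * v) = 0}"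
proof -
  define f :: "'a \<times> 'a \<Rightarrow> 'a \<times> 'a" where "f = (\<lambda>(y, z). (y - z, y + z))"
  define g :: "'a \<times> 'a \<Rightarrow> 'a \<times> 'a" where "g = (\<lambda>(u, v). ((u + v) / 2, (v - u) / 2))"
  have "(2::'a) \<noteq> 0" "(4::'a) \<noteq> 0"
    using two_neq_zero[OF odd_card_UNIV] mult_eq_0_iff[of "2::'a" 2] by simp_all
  then have "bij f"
    by (intro o_bij[of g]) (auto simp: f_def g_def fun_eq_iff field_simps)
  then have "card (f -` {(u, v). Tr (a * u * v) = 0}) = card {(u, v). Tr (a * u * v) = 0}"
    by (intro card_vimage_inj) (auto simp: bij_is_inj bij_is_surj)
  moreover have "{(y, z). Tr (a * y ^ 2) = Tr (a * z ^ 2)} = f -` {(u, v). Tr (a * u * v) = 0}"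
  proof -
    have "a * (y - z) * (y + z) = a * y ^ 2 - a * z ^ 2" for y z :: 'a
      by (simp add: algebra_simps power2_eq_square)
    then show ?thesis
      by (auto simp: f_def tr_diff)
  qed
  ultimately show ?thesis
    by (simp only:)
qed

lemma card_tr_quadratic_const:
  assumes "even m" and "c \<in> prime_subfield" and "c \<noteq> 0"
  shows "card {y. Tr (a * y ^ 2) = c} = card {y. Tr (a * y ^ 2) = 1}"
proof -
  obtain \<mu> where \<mu>: "c = \<mu> ^ 2" "\<mu> \<noteq> 0"
    using prime_subfield_subset_squares[OF assms] by (auto simp: nonzero_squares_def)
  have scale: "Tr (a * (\<mu> * y) ^ 2) = c * Tr (a * y ^ 2)" for y
    using tr_mult_prime_subfield[OF assms(2), of "a * y ^ 2"] \<mu>(1)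
    by (simp add: power_mult_distrib mult_ac)
  have "bij_betw (\<lambda>y. \<mu> * y) {y. Tr (a * y ^ 2) = 1} {y. Tr (a * y ^ 2) = c}"
  proof (rule bij_betw_byWitness[where f' = "\<lambda>y. y / \<mu>"])
    show "(\<lambda>y. \<mu> * y) ` {y. Tr (a * y ^ 2) = 1} \<subseteq> {y. Tr (a * y ^ 2) = c}"
      using scale by auto
    show "(\<lambda>y. y / \<mu>) ` {y. Tr (a * y ^ 2) = c} \<subseteq> {y. Tr (a * y ^ 2) = 1}"
    proof (rule image_subsetI)
      fix y
      assume "y \<in> {y. Tr (a * y ^ 2) = c}"
      then have "c * Tr (a * (y / \<mu>) ^ 2) = c * 1"
        using scale[of "y / \<mu>"] \<mu>(2) by simp
      then show "y / \<mu> \<in> {y. Tr (a * y ^ 2) = 1}"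
        using assms(3) by simp
    qed
  qed (use \<mu>(2) in simp_all)
  then show ?thesis
    by (metis bij_betw_same_card)
qed

lemma card_tr_quadratic_zero_even:
  assumes "even m" and "a \<noteq> 0"
  shows "(int p * int (card {y. Tr (a * y ^ 2) = 0}) - int (p ^ m)) ^ 2 = (int p - 1) ^ 2 * int (p ^ m)"
proof -
  define N where "N c = card {y. Tr (a * y ^ 2) = c}" for c
  have split: "(\<Sum>c\<in>prime_subfield. g (N c)) = g (N 0) + (p - 1) * g (N 1)" for g :: "nat \<Rightarrow> nat"
  proof -
    have "(\<Sum>c\<in>prime_subfield. g (N c)) = g (N 0) + (\<Sum>c\<in>prime_subfield - {0}. g (N c))"
      using zero_in_prime_subfield by (simp add: sum.remove)
    also have "(\<Sum>c\<in>prime_subfield - {0}. g (N c)) = (\<Sum>c\<in>prime_subfield - {0}. g (N 1))"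
      using card_tr_quadratic_const[OF assms(1)] by (intro sum.cong) (auto simp: N_def)
    finally show ?thesis
      using card_prime_subfield zero_in_prime_subfield by (simp add: card_Diff_singleton)
  qed
  have "N 0 + (p - 1) * N 1 = p ^ m"
    using split[of id] sum_card_tr_quadratic by (simp add: N_def)
  moreover have "1 \<le> p" "1 \<le> p ^ m"
    using p_gt_1 by simp_all
  ultimately have "int (N 0) + (int p - 1) * int (N 1) = int (p ^ m)"
    using arg_cong[of _ _ int] by fastforce
  moreover have "N 0 ^ 2 + (p - 1) * N 1 ^ 2 = p ^ m + (p ^ m - 1) * p ^ (m - 1)"
    using split[of "\<lambda>n. n ^ 2"] sum_square_card_tr_quadratic card_tr_quadratic_pairs
      card_tr_product_kernel[OF assms(2)] by (simp add: N_def)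
  then have "int (N 0) ^ 2 + (int p - 1) * int (N 1) ^ 2 = int (p ^ m) + (int (p ^ m) - 1) * int (p ^ (m - 1))"
    using \<open>1 \<le> p\<close> \<open>1 \<le> p ^ m\<close> arg_cong[of _ _ int] by fastforce
  moreover have "int p * int (p ^ (m - 1)) = int (p ^ m)"
    using p_power_m_eq by simp
  ultimately show ?thesis
    using second_moment_identity unfolding N_def by blast
qed

lemma trace_weight_even:
  assumes "even m" and "a \<noteq> 0"
  shows "2 * p * trace_weight nonzero_squares a \<in>
           {(p - 1) * (p ^ m - p ^ (m div 2)), (p - 1) * (p ^ m + p ^ (m div 2))}"
proof -
  define w where "w = trace_weight nonzero_squares a"
  define r where "r = p ^ (m div 2)"
  define Q where "Q = int p ^ m"
  obtain j where "m = 2 * j"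
    using assms(1) by blast
  then have "r * r = p ^ m"
    unfolding r_def by (simp add: power_add[symmetric] mult_2)
  then have "int (r * r) = int (p ^ m)"
    by (rule arg_cong)
  then have Q: "Q = int r ^ 2"
    unfolding Q_def by (simp add: power2_eq_square)
  have "int (card {y. Tr (a * y ^ 2) = 0} + 2 * w) = int (p ^ m)"
    using card_tr_quadratic_zero[of a] unfolding w_def by (rule arg_cong)
  then have "int (card {y. Tr (a * y ^ 2) = 0}) = Q - 2 * int w"
    unfolding Q_def by (simp add: eq_diff_eq)
  then have "(int p * (Q - 2 * int w) - Q) ^ 2 = ((int p - 1) * int r) ^ 2"
    using card_tr_quadratic_zero_even[OF assms] Q unfolding Q_def by (simp add: power_mult_distrib)
  then have "2 * int p * int w = (int p - 1) * (Q - int r)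
      \<or> 2 * int p * int w = (int p - 1) * (Q + int r)"
    by (rule square_eq_solve_weight)
  moreover have "r \<le> p ^ m"
    using p_gt_1 unfolding r_def by (simp add: power_increasing)
  then have "int ((p - 1) * (p ^ m - r)) = (int p - 1) * (Q - int r)"
    and "int ((p - 1) * (p ^ m + r)) = (int p - 1) * (Q + int r)"
    using p_gt_1 unfolding Q_def by simp_all
  ultimately have "int (2 * p * w) = int ((p - 1) * (p ^ m - r))
      \<or> int (2 * p * w) = int ((p - 1) * (p ^ m + r))"
    by simp
  then show ?thesis
    unfolding w_def r_def by (simp only: of_nat_eq_iff) blast
qed

lemma trace_weights_even:
  assumes "even m" and "c \<noteq> 0" and "c \<notin> nonzero_squares"
  defines "w\<^sub>1 \<equiv> (p - 1) * (p ^ m - p ^ (m div 2)) div (2 * p)"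
    and "w\<^sub>2 \<equiv> (p - 1) * (p ^ m + p ^ (m div 2)) div (2 * p)"
  shows "{trace_weight nonzero_squares 1, trace_weight nonzero_squares c} = {w\<^sub>1, w\<^sub>2}"
    and "w\<^sub>1 < w\<^sub>2"
proof -
  define L where "L = (p - 1) * (p ^ m - p ^ (m div 2))"
  define H where "H = (p - 1) * (p ^ m + p ^ (m div 2))"
  define x where "x = 2 * p * trace_weight nonzero_squares 1"
  define y where "y = 2 * p * trace_weight nonzero_squares c"
  have "p ^ (m div 2) \<le> p ^ m" "p ^ (m div 2) > 0"
    using p_gt_1 by (simp_all add: power_increasing)
  then have "p ^ m - p ^ (m div 2) < p ^ m + p ^ (m div 2)"
    and "(p ^ m - p ^ (m div 2)) + (p ^ m + p ^ (m div 2)) = 2 * p ^ m"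
    by linarith+
  then have "L < H" "L + H = (p - 1) * (2 * p ^ m)"
    using p_gt_1 unfolding L_def H_def by (simp_all flip: add_mult_distrib2)
  moreover have "trace_weight nonzero_squares 1 + trace_weight nonzero_squares c = p ^ m - p ^ (m - 1)"
    using trace_weight_add_nonsquare[OF one_neq_zero assms(2,3)] by simp
  then have "x + y = 2 * p * (p ^ m - p ^ (m - 1))"
    unfolding x_def y_def by (simp flip: add_mult_distrib2)
  moreover have "p * p ^ (m - 1) - p ^ (m - 1) = (p - 1) * p ^ (m - 1)"
    by (simp add: diff_mult_distrib)
  then have "2 * p * (p ^ m - p ^ (m - 1)) = (p - 1) * (2 * p ^ m)"
    using p_power_m_eq by (simp add: mult_ac)
  moreover have "x \<in> {L, H}" "y \<in> {L, H}"
    using trace_weight_even[OF assms(1)] assms(2) unfolding x_def y_def L_def H_def by simp_all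
  ultimately have "x = L \<and> y = H \<or> x = H \<and> y = L"
    by auto
  then obtain u v where uv: "L = 2 * p * u" "H = 2 * p * v"
    "{trace_weight nonzero_squares 1, trace_weight nonzero_squares c} = {u, v}"
    unfolding x_def y_def by blast
  moreover have "w\<^sub>1 = u" "w\<^sub>2 = v"
    using uv(1,2) p_gt_1 unfolding w\<^sub>1_def w\<^sub>2_def L_def[symmetric] H_def[symmetric] by simp_all
  ultimately show "{trace_weight nonzero_squares 1, trace_weight nonzero_squares c} = {w\<^sub>1, w\<^sub>2}"
    and "w\<^sub>1 < w\<^sub>2"
    using \<open>L < H\<close> by auto
qed

lemma inj_codeword_squares: "inj (codeword p m (nonzero_squares :: 'a set))"
proof (rule injI)
  fix x y :: 'a
  assume "codeword p m nonzero_squares x = codeword p m nonzero_squares y"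
  then have "codeword p m nonzero_squares (x - y) = (\<lambda>_. 0)"
    by (simp add: codeword_diff)
  then show "x = y"
    by (simp add: codeword_eq_0_iff trace_weight_eq_0_iff)
qed

lemma nonzero_weights_squares_image:
  "nonzero_weights p m (nonzero_squares :: 'a set) = trace_weight nonzero_squares ` (UNIV - {0})"
proof -
  have "nonzero_weights p m (nonzero_squares :: 'a set)
      = (\<lambda>x. hamming_wt nonzero_squares (codeword p m nonzero_squares x))
          ` {x::'a. codeword p m nonzero_squares x \<noteq> (\<lambda>_. 0)}"
    unfolding nonzero_weights_def code_def by auto
  also have "\<dots> = trace_weight nonzero_squares ` (UNIV - {0})"
    by (rule image_cong) (auto simp: hamming_wt_codeword codeword_eq_0_iff trace_weight_eq_0_iff)
  finally show ?thesis .
qed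

lemma card_code_squares: "card (code p m (nonzero_squares :: 'a set)) = p ^ m"
  unfolding code_def using inj_codeword_squares card_UNIV by (simp add: card_image)

lemma code_length_squares: "code_length (nonzero_squares :: 'a set) = (p ^ m - 1) div 2"
  using card_nonzero_squares[OF odd_card_UNIV] card_UNIV by (simp add: code_length_def)

lemma nonzero_weights_squares_eq:
  assumes "c \<noteq> 0" and "c \<notin> nonzero_squares"
  shows "nonzero_weights p m (nonzero_squares :: 'a set)
           = {trace_weight nonzero_squares 1, trace_weight nonzero_squares c}"
proof -
  define u where "u = trace_weight nonzero_squares 1"
  define v where "v = trace_weight nonzero_squares c"
  have on_squares: "trace_weight nonzero_squares d = u" if "d \<in> nonzero_squares" for d
    using trace_weight_mult_nonzero_square[OF that, of 1] unfolding u_def by simp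
  have on_nonsquares: "trace_weight nonzero_squares (c * d) = v" if "d \<in> nonzero_squares" for d
    using trace_weight_mult_nonzero_square[OF that, of c] unfolding v_def by (simp add: mult.commute)
  have "trace_weight nonzero_squares ` nonzero_squares = (\<lambda>_. u) ` (nonzero_squares :: 'a set)"
    by (rule image_cong) (simp_all add: on_squares)
  moreover have "trace_weight nonzero_squares ` (\<lambda>d. c * d) ` nonzero_squares = (\<lambda>_. v) ` (nonzero_squares :: 'a set)"
    unfolding image_image by (rule image_cong) (simp_all add: on_nonsquares)
  ultimately show ?thesis
    unfolding nonzero_weights_squares_image nonzero_split_squares(2)[OF odd_card_UNIV assms] image_Un
    using one_in_nonzero_squares unfolding u_def v_def by auto
qed

lemma weight_enumerator_squares:
  assumes "c \<noteq> 0" and "c \<notin> nonzero_squares"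
  defines "n \<equiv> (p ^ m - 1) div 2"
  shows "weight_enumerator p m (nonzero_squares :: 'a set)
           = 1 + monom n (trace_weight nonzero_squares 1) + monom n (trace_weight nonzero_squares c)"
proof -
  note split = nonzero_split_squares[OF odd_card_UNIV assms(1,2)]
  define u where "u = trace_weight nonzero_squares 1"
  define v where "v = trace_weight nonzero_squares c"
  have on_squares: "trace_weight nonzero_squares d = u" if "d \<in> nonzero_squares" for d
    using trace_weight_mult_nonzero_square[OF that, of 1] unfolding u_def by simp
  have on_nonsquares: "trace_weight nonzero_squares x = v" if "x \<in> (\<lambda>d. c * d) ` nonzero_squares" for x
    using that trace_weight_mult_nonzero_square[of _ c] unfolding v_def by (auto simp: mult.commute)
  have "card (nonzero_squares :: 'a set) = n" "card ((\<lambda>d. c * d) ` nonzero_squares) = n"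
    using card_nonzero_squares[OF odd_card_UNIV] card_UNIV assms(1)
    by (simp_all add: n_def card_image inj_on_def)
  have "weight_enumerator p m (nonzero_squares :: 'a set)
      = (\<Sum>x\<in>UNIV. monom 1 (trace_weight nonzero_squares x))"
    by (rule weight_enumerator_eq_sum_monom[OF inj_codeword_squares])
  also have "\<dots> = monom 1 (trace_weight nonzero_squares 0)
      + (\<Sum>x\<in>UNIV - {0}. monom 1 (trace_weight nonzero_squares x))"
    by (rule sum.remove) auto
  also have "(\<Sum>x\<in>UNIV - {0}. monom 1 (trace_weight nonzero_squares x))
      = (\<Sum>x\<in>nonzero_squares. monom 1 (trace_weight nonzero_squares x))
        + (\<Sum>x\<in>(\<lambda>d. c * d) ` nonzero_squares. monom 1 (trace_weight nonzero_squares x))"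
    unfolding split(2) by (rule sum.union_disjoint) (use split(1) in auto)
  also have "\<dots> = monom n u + monom n v"
    using on_squares on_nonsquares \<open>card nonzero_squares = n\<close>
      \<open>card ((\<lambda>d. c * d) ` nonzero_squares) = n\<close>
    by (simp add: of_nat_monom mult_monom)
  also have "monom 1 (trace_weight nonzero_squares 0) = 1"
    using trace_weight_eq_0_iff[of 0] by simp
  finally show ?thesis
    unfolding u_def v_def by (simp only: add.assoc)
qed

lemma square_code_odd:
  assumes "odd m"
  shows "nonzero_weights p m (nonzero_squares :: 'a set) = {(p - 1) * p ^ m div (2 * p)}"
proof -
  have "trace_weight nonzero_squares a = (p - 1) * p ^ m div (2 * p)" if "a \<noteq> 0" for a
  proof -
    have "2 * trace_weight nonzero_squares a = (p - 1) * p ^ (m - 1)"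
      using trace_weight_odd[OF assms that] p_power_m_eq by (simp add: diff_mult_distrib)
    then have "(p - 1) * p ^ m = 2 * p * trace_weight nonzero_squares a"
      using p_power_m_eq by (simp add: mult.left_commute)
    then show ?thesis
      using p_gt_1 by simp
  qed
  moreover obtain c :: 'a where "c \<noteq> 0" "c \<notin> nonzero_squares"
    using nonsquare_exists[OF odd_card_UNIV] by blast
  ultimately show ?thesis
    using nonzero_weights_squares_eq by simp
qed

lemma square_code_even:
  assumes "even m"
  defines "w\<^sub>1 \<equiv> (p - 1) * (p ^ m - p ^ (m div 2)) div (2 * p)"
    and "w\<^sub>2 \<equiv> (p - 1) * (p ^ m + p ^ (m div 2)) div (2 * p)"
    and "n \<equiv> (p ^ m - 1) div 2"
  shows "nonzero_weights p m (nonzero_squares :: 'a set) = {w\<^sub>1, w\<^sub>2}" and "w\<^sub>1 < w\<^sub>2"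
    and "weight_enumerator p m (nonzero_squares :: 'a set) = 1 + monom n w\<^sub>1 + monom n w\<^sub>2"
proof -
  obtain c :: 'a where c: "c \<noteq> 0" "c \<notin> nonzero_squares"
    using nonsquare_exists[OF odd_card_UNIV] by blast
  have weights: "{trace_weight nonzero_squares 1, trace_weight nonzero_squares c} = {w\<^sub>1, w\<^sub>2}"
    "w\<^sub>1 < w\<^sub>2"
    using trace_weights_even[OF assms(1) c] unfolding w\<^sub>1_def w\<^sub>2_def by simp_all
  then show "nonzero_weights p m (nonzero_squares :: 'a set) = {w\<^sub>1, w\<^sub>2}" and "w\<^sub>1 < w\<^sub>2"
    using nonzero_weights_squares_eq[OF c] by simp_all
  have "trace_weight nonzero_squares 1 = w\<^sub>1 \<and> trace_weight nonzero_squares c = w\<^sub>2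
      \<or> trace_weight nonzero_squares 1 = w\<^sub>2 \<and> trace_weight nonzero_squares c = w\<^sub>1"
    using weights(1) by (simp add: doubleton_eq_iff)
  then show "weight_enumerator p m (nonzero_squares :: 'a set) = 1 + monom n w\<^sub>1 + monom n w\<^sub>2"
    using weight_enumerator_squares[OF c] unfolding n_def by (auto simp: ac_simps)
qed

end

end

theorem mainTheorem3:
  fixes p m :: nat
    and F :: "'a::{field,finite} set"
  assumes "F = UNIV" and "prime p" and "odd p" and "card F = p ^ m"
  defines "q \<equiv> p ^ m"
    and "D \<equiv> (nonzero_squares :: 'a set)"
  shows "(odd m \<longrightarrow>
            is_t_weight 1 p m D \<and> code_length D = (q - 1) div 2 \<and> has_dim p m D m
            \<and> min_distance p m D = (p - 1) * q div (2 * p))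
       \<and> (even m \<longrightarrow>
            is_t_weight 2 p m D \<and> code_length D = (q - 1) div 2 \<and> has_dim p m D m
            \<and> min_distance p m D = (p - 1) * (q - p ^ (m div 2)) div (2 * p)
            \<and> weight_enumerator p m D =
                1 + monom ((q - 1) div 2) ((p - 1) * (q - p ^ (m div 2)) div (2 * p))
                  + monom ((q - 1) div 2) ((p - 1) * (q + p ^ (m div 2)) div (2 * p)))"
proof -
  have field: "prime p" "card (UNIV :: 'a set) = p ^ m" "odd p"
    using assms(1-4) by simp_all
  have parameters: "code_length D = (q - 1) div 2" "has_dim p m D m"
    using code_length_squares[OF field] card_code_squares[OF field]
    unfolding q_def D_def has_dim_def by simp_all
  have "is_t_weight 1 p m D \<and> min_distance p m D = (p - 1) * q div (2 * p)" if "odd m"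
    using square_code_odd[OF field that] unfolding is_t_weight_def min_distance_def q_def D_def by simp
  moreover have "is_t_weight 2 p m D \<and> min_distance p m D = (p - 1) * (q - p ^ (m div 2)) div (2 * p)
      \<and> weight_enumerator p m D =
          1 + monom ((q - 1) div 2) ((p - 1) * (q - p ^ (m div 2)) div (2 * p))
            + monom ((q - 1) div 2) ((p - 1) * (q + p ^ (m div 2)) div (2 * p))" if "even m"
    using square_code_even[OF field that]
    unfolding is_t_weight_def min_distance_def q_def D_def by simp
  ultimately show ?thesis
    using parameters by blast
qed

end
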